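(* Let $\alpha\le\omega_1$. 1) For every $B\in\mathcal B_\alpha$: (i) $D_{\mathrm{iie}}^{\alpha'}(B)$ is finite; (ii) if $\alpha$ is even, $D_{\mathrm{iie}}^{\alpha'}(B)$ is either empty or equal to $\{\emptyset\}$. 2) For every $A\in\mathcal A_\alpha$: (i) $D_{\mathrm{iie}}^{\alpha'}(D_{\mathrm{iie}}(A))$ is finite; (ii) if $\alpha$ is even, $D_{\mathrm{iie}}^{\alpha'}(D_{\mathrm{iie}}(A))$ is either empty or equal to $\{\emptyset\}$.
   Context: $\omega^{<\omega}$ finite sequences of naturals, $s^\frown t$ concatenation (also for $t\in\omega^\omega$), $h^\frown B=\{h^\frown s:s\in B\}$. For $S\subset\omega^{<\omega}\cup\omega^\omega$, $\mathrm{cl}_{\mathrm{Tr}}(S)$ is the set of finite initial segments of elements of $S$. For a tree $T$, $D_{\mathrm{iie}}(T)=\{t\in T: T$ contains infinitely many pairwise incomparable extensions of $t$ of pairwise different lengths$\}$; for any $S$, $D_{\mathrm{iie}}(S)=D_{\mathrm{iie}}(\mathrm{cl}_{\mathrm{Tr}}(S))$, $D^0_{\mathrm{iie}}(S)=\mathrm{cl}_{\mathrm{Tr}}(S)$, $D^{\beta+1}_{\mathrm{iie}}=D_{\mathrm{iie}}\circ D^\beta_{\mathrm{iie}}$, $D^\lambda_{\mathrm{iie}}(S)=\bigcap_{\beta<\lambda}D^\beta_{\mathrm{iie}}(S)$ for limit $\lambda$. For $\alpha=\lambda+2n+i$ ($\lambda$ limit or 0, $n\in\omega$, $i\in\{0,1\}$),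 $\alpha'=\lambda+n$; parity of $\alpha$ is that of $i$ (so $\omega_1$ is even, $\omega_1'=\omega_1$). A forking sequence is a sequence $(f_n)_{n\in\omega}$ of nonempty elements of $\omega^{<\omega}$ with $f_n(0)\ne f_m(0)$ for $n\ne m$. Finite broom sets: $\mathcal B_0=\{\{\emptyset\}\}$; for $1\le\alpha<\omega_1$ odd, $\mathcal B_\alpha=\mathcal B_{<\alpha}\cup\{h^\frown B: B\in\mathcal B_{\alpha-1},h\in\omega^{<\omega}\}$; for $0<\alpha<\omega_1$ even, $\mathcal B_\alpha=\mathcal B_{<\alpha}\cup\{\bigcup_nf_n^\frown B_n: B_n\in\mathcal B_{<\alpha},(f_n)$ forking$\}$, where $\mathcal B_{<\alpha}=\bigcup_{\beta<\alpha}\mathcal B_\beta$; $\mathcal B_{\omega_1}=\bigcup_{\alpha<\omega_1}\mathcal B_\alpha$. A countable set $A\subset\omega^\omega$ is a broom-extension of $B\in\mathcal B_{\omega_1}$ if $A=\{s^\frown f^s_n{}^\frown\nu^s_n: s\in B,n\in\omega\}$ for some forking sequences $(f^s_n)_n$, $s\in B$, and some $\nu^s_n\in\omega^\omega$. $\mathcal A_\alpha$ is the set of broom-extensions of elements of $\mathcal B_\alpha$. *)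

theory Defs
  imports Main "HOL-Library.Sublist" "HOL-Library.Countable_Set"
begin

text \<open>W is a fixed well-order of order type omega_1 (the cardinal successor of
  aleph_0, i.e. the initial ordinal omega_1); its field consists of nat-sets
  representing the countable ordinals.  An ordinal alpha \<le> omega_1 is an element
  of type nat set option: Some a (a in Field W) is a countable ordinal, None is omega_1.\<close>

definition W :: "nat set rel" where
  "W = cardSuc (card_of (UNIV :: nat set))"

definition ords_le_omega1 :: "nat set option set" where
  "ords_le_omega1 = Some ` Field W \<union> {None}"

definition lt_set :: "nat set \<Rightarrow> nat set set" where
  "lt_set a = {c. (c, a) \<in> W \<and> c \<noteq> a}"

definition le_set :: "nat set \<Rightarrow> nat set set" where
  "le_set a = {c. (c, a) \<in> W}"

text \<open>a = 0 iff lt_set a = {}; a = c + 1 iff lt_set a = le_set c (c in Field W)\<close>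
definition is_succ_of :: "nat set \<Rightarrow> nat set \<Rightarrow> bool" where
  "is_succ_of a c \<longleftrightarrow> c \<in> Field W \<and> lt_set a = le_set c"

definition pred_ord :: "nat set \<Rightarrow> nat set" where
  "pred_ord a = (THE c. is_succ_of a c)"

text \<open>the limit part lambda (limit or 0) of a = lambda + k: the least b \<le> a such
  that the interval [b, a] is finite\<close>
definition lim_part :: "nat set \<Rightarrow> nat set" where
  "lim_part a = (THE b. (b, a) \<in> W \<and> finite (le_set a - lt_set b) \<and>
      (\<forall>c. (c, a) \<in> W \<and> finite (le_set a - lt_set c) \<longrightarrow> (b, c) \<in> W))"

text \<open>the finite part k = 2n + i of a = lambda + k\<close>
definition fin_part :: "nat set \<Rightarrow> nat" where
  "fin_part a = card (lt_set a - lt_set (lim_part a))"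

text \<open>alpha' for countable alpha = lambda + 2n + i: lambda + n\<close>
definition prime_ord :: "nat set \<Rightarrow> nat set" where
  "prime_ord a = (THE c. (lim_part a, c) \<in> W \<and> (c, a) \<in> W \<and>
      card (lt_set c - lt_set (lim_part a)) = fin_part a div 2)"

definition primeO :: "nat set option \<Rightarrow> nat set option" where
  "primeO x = (case x of None \<Rightarrow> None | Some a \<Rightarrow> Some (prime_ord a))"

definition evenO :: "nat set option \<Rightarrow> bool" where
  "evenO x = (case x of None \<Rightarrow> True | Some a \<Rightarrow> even (fin_part a))"

definition clTr :: "nat list set \<Rightarrow> nat list set" where
  "clTr S = {take k s | s k. s \<in> S}"

definition clTr_inf :: "(nat \<Rightarrow> nat) set \<Rightarrow> nat list set" where
  "clTr_inf S = {map f [0..<k] | f k. f \<in> S}"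

definition Diie_tree :: "nat list set \<Rightarrow> nat list set" where
  "Diie_tree T = {t \<in> T. \<exists>E \<subseteq> T. infinite E \<and> (\<forall>e \<in> E. prefix t e) \<and>
      (\<forall>x \<in> E. \<forall>y \<in> E. x \<noteq> y \<longrightarrow> \<not> prefix x y \<and> \<not> prefix y x) \<and> inj_on length E}"

definition Diie :: "nat list set \<Rightarrow> nat list set" where
  "Diie S = Diie_tree (clTr S)"

definition Diie_inf :: "(nat \<Rightarrow> nat) set \<Rightarrow> nat list set" where
  "Diie_inf A = Diie_tree (clTr_inf A)"

definition Diter :: "nat list set \<Rightarrow> nat set \<Rightarrow> nat list set" where
  "Diter S = wfrec (W - Id) (\<lambda>F a.
      if lt_set a = {} then clTr S
      else if (\<exists>c. is_succ_of a c) then Diie (F (pred_ord a))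
      else \<Inter> (F ` lt_set a))"

definition DiterO :: "nat list set \<Rightarrow> nat set option \<Rightarrow> nat list set" where
  "DiterO S x = (case x of None \<Rightarrow> \<Inter> (Diter S ` Field W) | Some a \<Rightarrow> Diter S a)"

definition hcat :: "nat list \<Rightarrow> nat list set \<Rightarrow> nat list set" where
  "hcat h B = {h @ s | s. s \<in> B}"

definition forking :: "(nat \<Rightarrow> nat list) \<Rightarrow> bool" where
  "forking f \<longleftrightarrow> (\<forall>n. f n \<noteq> []) \<and> (\<forall>n m. n \<noteq> m \<longrightarrow> f n ! 0 \<noteq> f m ! 0)"

definition Brooms :: "nat set \<Rightarrow> nat list set set" where
  "Brooms = wfrec (W - Id) (\<lambda>F a.
      (\<Union> (F ` lt_set a)) \<union>
      (if lt_set a = {} then {{[]}}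
       else if odd (fin_part a) then {hcat h B | h B. B \<in> F (pred_ord a)}
       else {(\<Union>n. hcat (f n) (Bs n)) | f Bs. forking f \<and> (\<forall>n. Bs n \<in> \<Union> (F ` lt_set a))}))"

definition BroomsO :: "nat set option \<Rightarrow> nat list set set" where
  "BroomsO x = (case x of None \<Rightarrow> \<Union> (Brooms ` Field W) | Some a \<Rightarrow> Brooms a)"

definition conc :: "nat list \<Rightarrow> (nat \<Rightarrow> nat) \<Rightarrow> (nat \<Rightarrow> nat)" where
  "conc s \<nu> = (\<lambda>k. if k < length s then s ! k else \<nu> (k - length s))"

definition broom_ext :: "(nat \<Rightarrow> nat) set \<Rightarrow> nat list set \<Rightarrow> bool" where
  "broom_ext A B \<longleftrightarrow> countable A \<and>
     (\<exists>(f :: nat list \<Rightarrow> nat \<Rightarrow> nat list) (\<nu> :: nat list \<Rightarrow> nat \<Rightarrow> (nat \<Rightarrow> nat)).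
        (\<forall>s \<in> B. forking (f s)) \<and>
        A = {conc (s @ f s n) (\<nu> s n) | s n. s \<in> B})"

definition BroomExtO :: "nat set option \<Rightarrow> (nat \<Rightarrow> nat) set set" where
  "BroomExtO x = {A. \<exists>B \<in> BroomsO x. broom_ext A B}"

end

theory Submission
  imports Defs
begin

text \<open>Since the derivatives \<open>D\<^sup>\<beta>\<close> shrink with \<open>\<beta>\<close>, and a finite tree has empty derivative,
  a broom already in \<open>\<B>\<^sub>\<gamma>\<close> for some \<open>\<gamma> < \<alpha>\<close> is handled by the induction hypothesis
  and \<open>\<gamma>' \<le> \<alpha>'\<close>, with \<open>\<gamma>' < \<alpha>'\<close> when \<open>\<alpha>\<close> is even.
  A new broom \<open>h\<^sup>\<frown>B\<close> at an odd \<open>\<alpha> = \<gamma> + 1\<close> has \<open>\<gamma>\<close> even and \<open>\<gamma>' = \<alpha>'\<close>; every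
  derivative of \<open>h\<^sup>\<frown>B\<close> lies in the tree closure of \<open>h\<^sup>\<frown>\<close>(the same derivative of \<open>B\<close>),
  so \<open>D\<^sup>\<alpha>'(h\<^sup>\<frown>B) \<subseteq> cl(h\<^sup>\<frown>{\<emptyset>})\<close> consists of prefixes of \<open>h\<close>.
  A new broom \<open>\<Union>\<^sub>n f\<^sub>n\<^sup>\<frown>B\<^sub>n\<close> at an even \<open>\<alpha>\<close> has all \<open>D\<^sup>\<alpha>'(B\<^sub>n)\<close> empty, and the
  derivatives of a forking union are computed branchwise, leaving only the root.
  For part 2, the branches of a broom extension of \<open>B\<close> split off pairwise incomparably at
  every \<open>s \<in> B\<close> with pairwise different lengths, and only there, so
  \<open>D\<^sub>i\<^sub>i\<^sub>e(A)\<close> is the tree closure of \<open>B\<close>, which has the same derivatives as \<open>B\<close>.\<close>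

section \<open>Countable ordinals\<close>

lemma W_Well_order: "Well_order W"
  unfolding W_def by (simp add: cardSuc_Well_order card_of_Card_order)

lemma W_refl: "a \<in> Field W \<Longrightarrow> (a, a) \<in> W"
  using W_Well_order
  unfolding well_order_on_def linear_order_on_def partial_order_on_def preorder_on_def refl_on_def
  by blast

lemma W_trans: "(a, b) \<in> W \<Longrightarrow> (b, c) \<in> W \<Longrightarrow> (a, c) \<in> W"
  using W_Well_order
  unfolding well_order_on_def linear_order_on_def partial_order_on_def preorder_on_def trans_def
  by blast

lemma W_antisym: "(a, b) \<in> W \<Longrightarrow> (b, a) \<in> W \<Longrightarrow> a = b"
  using W_Well_order unfolding well_order_on_def linear_order_on_def partial_order_on_def antisym_def
  by blast

lemma W_total: "a \<in> Field W \<Longrightarrow> b \<in> Field W \<Longrightarrow> (a, b) \<in> W \<or> (b, a) \<in> W"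
  using W_Well_order W_refl unfolding well_order_on_def linear_order_on_def total_on_def
  by metis

lemma wf_W_strict: "wf (W - Id)"
  using W_Well_order unfolding well_order_on_def by blast

lemma W_FieldI1: "(a, b) \<in> W \<Longrightarrow> a \<in> Field W"
  by (rule FieldI1)

lemma W_FieldI2: "(a, b) \<in> W \<Longrightarrow> b \<in> Field W"
  by (rule FieldI2)

lemma W_least:
  assumes "X \<subseteq> Field W" "x \<in> X"
  shows "\<exists>m\<in>X. \<forall>y\<in>X. (m, y) \<in> W"
proof -
  obtain m where m: "m \<in> X" "\<forall>y. (y, m) \<in> W - Id \<longrightarrow> y \<notin> X"
    using wf_W_strict assms(2) unfolding wf_eq_minimal by metis
  have "(m, y) \<in> W" if "y \<in> X" for y
    using that m assms(1) W_total[of m y] W_refl by auto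
  then show ?thesis using m(1) by blast
qed

lemma W_no_max: "a \<in> Field W \<Longrightarrow> \<exists>b\<in>Field W. (a, b) \<in> W \<and> a \<noteq> b"
proof -
  have "infinite (Field W)"
    unfolding W_def using cardSuc_finite[OF card_of_Card_order, of "UNIV :: nat set"]
    by (simp add: Field_card_of)
  then show "a \<in> Field W \<Longrightarrow> ?thesis"
    using infinite_Card_order_limit[of W a] unfolding W_def
    by (metis cardSuc_Card_order card_of_Card_order)
qed

lemma lt_set_iff: "c \<in> lt_set a \<longleftrightarrow> (c, a) \<in> W - Id"
  unfolding lt_set_def by auto

lemma lt_set_Field: "c \<in> lt_set a \<Longrightarrow> a \<in> Field W"
  unfolding lt_set_def by (blast intro: W_FieldI2)

definition Icc_W :: "nat set \<Rightarrow> nat set \<Rightarrow> nat set set" where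
  "Icc_W b a = {x. (b, x) \<in> W \<and> (x, a) \<in> W}"

definition Ico_W :: "nat set \<Rightarrow> nat set \<Rightarrow> nat set set" where
  "Ico_W b a = {x. (b, x) \<in> W \<and> (x, a) \<in> W \<and> x \<noteq> a}"

lemma le_set_diff_lt_set: "b \<in> Field W \<Longrightarrow> le_set a - lt_set b = Icc_W b a"
  unfolding Icc_W_def le_set_def lt_set_def using W_total W_antisym W_FieldI1 by blast

lemma lt_set_diff_lt_set: "b \<in> Field W \<Longrightarrow> lt_set a - lt_set b = Ico_W b a"
  unfolding Ico_W_def le_set_def lt_set_def using W_total W_antisym W_FieldI1 by blast

lemma Ico_W_subset_Icc_W: "(y, a) \<in> W \<Longrightarrow> Ico_W l y \<subseteq> Icc_W l a"
  unfolding Ico_W_def Icc_W_def using W_trans by blast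

lemma lim_part_props:
  assumes a: "a \<in> Field W"
  shows "(lim_part a, a) \<in> W" "finite (Icc_W (lim_part a) a)"
    "\<And>c. (c, a) \<in> W \<Longrightarrow> finite (Icc_W c a) \<Longrightarrow> (lim_part a, c) \<in> W"
proof -
  let ?L = "{b. (b, a) \<in> W \<and> finite (Icc_W b a)}"
  have "Icc_W a a = {a}" unfolding Icc_W_def using W_antisym W_refl[OF a] by auto
  then have "a \<in> ?L" using W_refl[OF a] by auto
  then obtain m where m: "m \<in> ?L" "\<forall>y\<in>?L. (m, y) \<in> W"
    using W_least[of ?L a] W_FieldI1 by blast
  let ?P = "\<lambda>b. (b, a) \<in> W \<and> finite (le_set a - lt_set b) \<and>
      (\<forall>c. (c, a) \<in> W \<and> finite (le_set a - lt_set c) \<longrightarrow> (b, c) \<in> W)"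
  have P: "?P b \<longleftrightarrow> b \<in> ?L \<and> (\<forall>y\<in>?L. (b, y) \<in> W)" for b
    using le_set_diff_lt_set W_FieldI1 by auto
  have "?P m" using P m by blast
  moreover have "?P b \<Longrightarrow> b = m" for b using P m W_antisym by blast
  ultimately have "?P (lim_part a)" unfolding lim_part_def by (rule theI)
  with P show "(lim_part a, a) \<in> W" "finite (Icc_W (lim_part a) a)"
    "\<And>c. (c, a) \<in> W \<Longrightarrow> finite (Icc_W c a) \<Longrightarrow> (lim_part a, c) \<in> W"
    by blast+
qed

text \<open>The finite part of \<open>a = \<lambda> + k\<close> is the rank of \<open>a\<close> in the finite interval \<open>[\<lambda>, a]\<close>.\<close>

definition rank_above :: "nat set \<Rightarrow> nat set \<Rightarrow> nat" where
  "rank_above l x = card (Ico_W l x)"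

lemma rank_above_strict_mono:
  assumes "(l, x) \<in> W" "(x, y) \<in> W" "x \<noteq> y" "finite (Ico_W l y)"
  shows "rank_above l x < rank_above l y"
proof -
  have "Ico_W l x \<subseteq> Ico_W l y" unfolding Ico_W_def using assms W_trans W_antisym by blast
  moreover have "x \<in> Ico_W l y - Ico_W l x" using assms unfolding Ico_W_def by auto
  ultimately have "Ico_W l x \<subset> Ico_W l y" by blast
  then show ?thesis unfolding rank_above_def using assms(4) psubset_card_mono by blast
qed

lemma finite_Ico_W_in_Icc_W:
  "finite (Icc_W l a) \<Longrightarrow> x \<in> Icc_W l a \<Longrightarrow> finite (Ico_W l x)"
  by (metis (no_types, lifting) Icc_W_def Ico_W_subset_Icc_W finite_subset mem_Collect_eq)

lemma rank_above_le_iff: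
  assumes "finite (Icc_W l a)" "x \<in> Icc_W l a" "y \<in> Icc_W l a"
  shows "(x, y) \<in> W \<longleftrightarrow> rank_above l x \<le> rank_above l y"
proof
  assume "(x, y) \<in> W"
  then show "rank_above l x \<le> rank_above l y"
    using rank_above_strict_mono[of l x y] finite_Ico_W_in_Icc_W[OF assms(1,3)] assms(2)
    unfolding Icc_W_def by fastforce
next
  assume le: "rank_above l x \<le> rank_above l y"
  show "(x, y) \<in> W"
  proof (rule ccontr)
    assume "(x, y) \<notin> W"
    then have "(y, x) \<in> W" "y \<noteq> x"
      using W_total[of x y] W_FieldI1 W_FieldI2 assms W_refl unfolding Icc_W_def by blast+
    then have "rank_above l y < rank_above l x"
      using rank_above_strict_mono[of l y x] finite_Ico_W_in_Icc_W[OF assms(1,2)] assms(3)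
      unfolding Icc_W_def by blast
    with le show False by simp
  qed
qed

lemma rank_above_inj:
  assumes "finite (Icc_W l a)" "x \<in> Icc_W l a" "y \<in> Icc_W l a"
    "rank_above l x = rank_above l y"
  shows "x = y"
  using rank_above_le_iff[OF assms(1,2,3)] rank_above_le_iff[OF assms(1,3,2)] assms(4) W_antisym
  by auto

lemma rank_above_surj:
  assumes "finite (Icc_W l a)" "(l, a) \<in> W" "j \<le> rank_above l a"
  shows "\<exists>x\<in>Icc_W l a. rank_above l x = j"
proof -
  have a: "a \<in> Icc_W l a" using assms(2) W_refl W_FieldI2 unfolding Icc_W_def by blast
  have ins: "Icc_W l a = insert a (Ico_W l a)" "a \<notin> Ico_W l a"
    using a unfolding Icc_W_def Ico_W_def by auto
  have "inj_on (rank_above l) (Icc_W l a)"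
    using rank_above_inj assms(1) unfolding inj_on_def by blast
  then have "card (rank_above l ` Icc_W l a) = rank_above l a + 1"
    using card_image ins assms(1) unfolding rank_above_def by fastforce
  moreover have "rank_above l ` Icc_W l a \<subseteq> {..rank_above l a}"
    using rank_above_le_iff[OF assms(1) _ a] unfolding Icc_W_def by auto
  ultimately have "rank_above l ` Icc_W l a = {..rank_above l a}"
    by (metis card_subset_eq finite_atMost card_atMost Suc_eq_plus1)
  then show ?thesis using assms(3) by (metis atMost_iff imageE)
qed

lemma fin_part_eq_rank_above: "a \<in> Field W \<Longrightarrow> fin_part a = rank_above (lim_part a) a"
  unfolding fin_part_def rank_above_def using lt_set_diff_lt_set lim_part_props W_FieldI1 by metis

lemma prime_ord_props:
  assumes a: "a \<in> Field W"
  shows "prime_ord a \<in> Icc_W (lim_part a) a"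
    "rank_above (lim_part a) (prime_ord a) = fin_part a div 2"
proof -
  let ?l = "lim_part a"
  have L: "(?l, a) \<in> W" "finite (Icc_W ?l a)" using lim_part_props[OF a] by auto
  let ?P = "\<lambda>c. (?l, c) \<in> W \<and> (c, a) \<in> W \<and> card (lt_set c - lt_set ?l) = fin_part a div 2"
  have P: "?P c \<longleftrightarrow> c \<in> Icc_W ?l a \<and> rank_above ?l c = fin_part a div 2" for c
    using lt_set_diff_lt_set[OF W_FieldI1[OF L(1)]] unfolding rank_above_def Icc_W_def by auto
  obtain x where x: "x \<in> Icc_W ?l a" "rank_above ?l x = fin_part a div 2"
    using rank_above_surj[OF L(2) L(1), of "fin_part a div 2"] fin_part_eq_rank_above[OF a] by auto
  have "?P x" using P x by blast
  moreover have "?P y \<Longrightarrow> y = x" for y using P x rank_above_inj[OF L(2)] by metis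
  ultimately have "?P (prime_ord a)" unfolding prime_ord_def by (rule theI)
  with P show "prime_ord a \<in> Icc_W ?l a" "rank_above ?l (prime_ord a) = fin_part a div 2"
    by blast+
qed

lemma prime_ord_le: "a \<in> Field W \<Longrightarrow> (prime_ord a, a) \<in> W"
  using prime_ord_props(1) unfolding Icc_W_def by blast

lemma lim_part_eq:
  assumes a: "a \<in> Field W" and c: "(lim_part a, c) \<in> W" "(c, a) \<in> W"
  shows "lim_part c = lim_part a"
proof -
  have cF: "c \<in> Field W" using c W_FieldI2 by blast
  note La = lim_part_props[OF a] and Lc = lim_part_props[OF cF]
  have "Icc_W (lim_part a) c \<subseteq> Icc_W (lim_part a) a" unfolding Icc_W_def using c W_trans by blast
  then have 1: "(lim_part c, lim_part a) \<in> W" using Lc(3)[OF c(1)] La(2) finite_subset by blast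
  have "Icc_W (lim_part c) a \<subseteq> Icc_W (lim_part c) c \<union> Icc_W (lim_part a) a"
    unfolding Icc_W_def using W_total[of c] cF W_FieldI2 c W_trans by blast
  then have "finite (Icc_W (lim_part c) a)" using Lc(2) La(2) finite_subset by blast
  then have 2: "(lim_part a, lim_part c) \<in> W" using La(3) Lc(1) c(2) W_trans by blast
  from 1 2 show ?thesis using W_antisym by blast
qed

lemma prime_ord_mono:
  assumes c: "(c, a) \<in> W"
  shows "(prime_ord c, prime_ord a) \<in> W"
    and "c \<noteq> a \<Longrightarrow> even (fin_part a) \<Longrightarrow> prime_ord c \<noteq> prime_ord a"
proof -
  have a: "a \<in> Field W" and cF: "c \<in> Field W" using c W_FieldI1 W_FieldI2 by blast+
  let ?l = "lim_part a"
  note La = lim_part_props[OF a] and pa = prime_ord_props[OF a]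
  have "(prime_ord c, prime_ord a) \<in> W \<and>
      (c \<noteq> a \<and> even (fin_part a) \<longrightarrow> prime_ord c \<noteq> prime_ord a)"
  proof (cases "(?l, c) \<in> W")
    case True
    have lc: "lim_part c = ?l" using lim_part_eq[OF a True c] .
    have pc: "prime_ord c \<in> Icc_W ?l a" "rank_above ?l (prime_ord c) = fin_part c div 2"
      using prime_ord_props[OF cF] lc c W_trans unfolding Icc_W_def by auto
    have ca: "c \<in> Icc_W ?l a" "a \<in> Icc_W ?l a"
      using True c La W_refl[OF a] unfolding Icc_W_def by auto
    have fc: "fin_part c = rank_above ?l c" "fin_part a = rank_above ?l a"
      using fin_part_eq_rank_above[OF cF] fin_part_eq_rank_above[OF a] lc by auto
    have "rank_above ?l c \<le> rank_above ?l a" using rank_above_le_iff[OF La(2) ca] c by blast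
    then have "(prime_ord c, prime_ord a) \<in> W"
      using rank_above_le_iff[OF La(2) pc(1) pa(1)] pc(2) pa(2) fc by (simp add: div_le_mono)
    moreover have "prime_ord c \<noteq> prime_ord a" if "c \<noteq> a" "even (fin_part a)"
    proof -
      have "rank_above ?l c < rank_above ?l a"
        using rank_above_strict_mono[of ?l c a] True c that(1)
          finite_Ico_W_in_Icc_W[OF La(2) ca(2)] by blast
      then have "fin_part c div 2 < fin_part a div 2" using fc that(2) by presburger
      then show ?thesis using pc(2) pa(2) by auto
    qed
    ultimately show ?thesis by blast
  next
    case False
    text \<open>Then \<open>c\<close> lies below the limit part of \<open>a\<close>, and \<open>prime_ord a\<close> above it.\<close>
    have "(c, ?l) \<in> W" using False W_total[OF cF W_FieldI1[OF La(1)]] by auto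
    moreover have "(?l, prime_ord a) \<in> W" using pa(1) unfolding Icc_W_def by blast
    moreover have "(prime_ord c, c) \<in> W" using prime_ord_le[OF cF] .
    ultimately show ?thesis using False W_trans by metis
  qed
  then show "(prime_ord c, prime_ord a) \<in> W"
    and "c \<noteq> a \<Longrightarrow> even (fin_part a) \<Longrightarrow> prime_ord c \<noteq> prime_ord a" by blast+
qed

lemma is_succ_of_pred_ord:
  assumes "is_succ_of a c"
  shows "pred_ord a = c" "c \<in> lt_set a"
proof -
  have c: "c \<in> Field W" "lt_set a = le_set c" using assms unfolding is_succ_of_def by auto
  then show "c \<in> lt_set a" using W_refl unfolding le_set_def by blast
  have "d = c" if "is_succ_of a d" for d
  proof -
    have d: "d \<in> Field W" "le_set d = le_set c" using that c(2) unfolding is_succ_of_def by simp_all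
    then have "(d, c) \<in> W" "(c, d) \<in> W" using c W_refl unfolding le_set_def by blast+
    then show ?thesis using W_antisym by blast
  qed
  then show "pred_ord a = c" unfolding pred_ord_def using assms by (rule the_equality[rotated])
qed

lemma ex_succ_below:
  assumes "(p, q) \<in> W" "p \<noteq> q"
  shows "\<exists>d. is_succ_of d p \<and> (d, q) \<in> W"
proof -
  let ?X = "{x \<in> Field W. (p, x) \<in> W \<and> p \<noteq> x}"
  have "q \<in> ?X" using assms W_FieldI2 by blast
  then obtain d where d: "d \<in> ?X" "\<forall>y\<in>?X. (d, y) \<in> W" using W_least[of ?X q] by blast
  have pF: "p \<in> Field W" using assms W_FieldI1 by blast
  have "lt_set d = le_set p"
  proof (intro set_eqI iffI)
    fix x assume "x \<in> lt_set d"
    then have x: "(x, d) \<in> W" "x \<noteq> d" unfolding lt_set_def by auto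
    have "(p, x) \<notin> W \<or> p = x"
    proof (rule ccontr)
      assume "\<not> ?thesis"
      then have "(d, x) \<in> W" using d(2) W_FieldI1[OF x(1)] by blast
      then show False using x W_antisym by blast
    qed
    then show "x \<in> le_set p"
      using W_total[OF W_FieldI1[OF x(1)] pF] W_refl[OF pF] unfolding le_set_def by auto
  next
    fix x assume "x \<in> le_set p"
    then have "(x, p) \<in> W" unfolding le_set_def by auto
    then show "x \<in> lt_set d" using d(1) W_trans W_antisym unfolding lt_set_def by blast
  qed
  then show ?thesis using pF d(1) \<open>q \<in> ?X\<close> d(2) unfolding is_succ_of_def by blast
qed

lemma zero_ord_props:
  assumes a: "a \<in> Field W" "lt_set a = {}"
  shows "prime_ord a = a" "fin_part a = 0"
proof -
  have l: "lim_part a = a" using lim_part_props(1)[OF a(1)] a(2) unfolding lt_set_def by blast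
  then have "Icc_W (lim_part a) a = {a}" unfolding Icc_W_def using W_antisym W_refl[OF a(1)] by auto
  then show "prime_ord a = a" using prime_ord_props(1)[OF a(1)] by auto
  have "Ico_W a a = {}" unfolding Ico_W_def using W_antisym by blast
  then show "fin_part a = 0" using fin_part_eq_rank_above[OF a(1)] l unfolding rank_above_def by simp
qed

text \<open>The predecessor is the ordinal of rank \<open>k - 1\<close> above the same limit.\<close>

lemma odd_fin_part_succ:
  assumes a: "a \<in> Field W" and odd: "odd (fin_part a)"
  shows "is_succ_of a (pred_ord a)" "even (fin_part (pred_ord a))"
    "prime_ord (pred_ord a) = prime_ord a"
proof -
  let ?l = "lim_part a" and ?k = "fin_part a"
  note La = lim_part_props[OF a]
  have k: "?k = rank_above ?l a" using fin_part_eq_rank_above[OF a] .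
  obtain c where c: "c \<in> Icc_W ?l a" "rank_above ?l c = ?k - 1"
    using rank_above_surj[OF La(2) La(1), of "?k - 1"] k by auto
  have aa: "a \<in> Icc_W ?l a" using La W_refl[OF a] unfolding Icc_W_def by auto
  have "?k \<ge> 1" using odd by (cases ?k) auto
  then have cne: "c \<noteq> a" using c k by auto
  have cF: "c \<in> Field W" and ca: "(c, a) \<in> W" using c W_FieldI2 unfolding Icc_W_def by blast+
  have "lt_set a = le_set c"
  proof (intro set_eqI iffI)
    fix x assume "x \<in> lt_set a"
    then have x: "(x, a) \<in> W" "x \<noteq> a" unfolding lt_set_def by auto
    show "x \<in> le_set c"
    proof (cases "(?l, x) \<in> W")
      case True
      then have xi: "x \<in> Icc_W ?l a" using x unfolding Icc_W_def by blast
      have "rank_above ?l x < rank_above ?l a"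
        using rank_above_strict_mono[of ?l x a] True x finite_Ico_W_in_Icc_W[OF La(2) aa] by blast
      then have "rank_above ?l x \<le> rank_above ?l c" using c k by simp
      then show ?thesis using rank_above_le_iff[OF La(2) xi c(1)] unfolding le_set_def by blast
    next
      case False
      then have "(x, ?l) \<in> W" using W_total[OF W_FieldI1[OF x(1)]] La W_FieldI1 by blast
      then show ?thesis using c W_trans unfolding le_set_def Icc_W_def by blast
    qed
  next
    fix x assume "x \<in> le_set c"
    then have "(x, c) \<in> W" unfolding le_set_def by auto
    then show "x \<in> lt_set a" using ca cne W_trans W_antisym unfolding lt_set_def by blast
  qed
  then have sc: "is_succ_of a c" unfolding is_succ_of_def using cF by blast
  then have pc: "pred_ord a = c" using is_succ_of_pred_ord by blast
  with sc show "is_succ_of a (pred_ord a)" by simp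
  have lc: "lim_part c = ?l" using lim_part_eq[OF a _ ca] c unfolding Icc_W_def by blast
  have fc: "fin_part c = ?k - 1" using fin_part_eq_rank_above[OF cF] lc c by simp
  then show "even (fin_part (pred_ord a))" using pc odd by simp
  have "(?k - 1) div 2 = ?k div 2" using odd by presburger
  then have "prime_ord c \<in> Icc_W ?l a" "rank_above ?l (prime_ord c) = ?k div 2"
    using prime_ord_props[OF cF] lc fc ca W_trans unfolding Icc_W_def by auto
  then have "prime_ord c = prime_ord a"
    using rank_above_inj[OF La(2) _ prime_ord_props(1)[OF a]] prime_ord_props(2)[OF a] by simp
  then show "prime_ord (pred_ord a) = prime_ord a" using pc by simp
qed

lemma W_induct [case_names zero succ limit]:
  assumes zero: "\<And>a. lt_set a = {} \<Longrightarrow> P a"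
    and succ: "\<And>a c. is_succ_of a c \<Longrightarrow> P c \<Longrightarrow> P a"
    and limit: "\<And>a. lt_set a \<noteq> {} \<Longrightarrow> \<nexists>c. is_succ_of a c \<Longrightarrow> (\<And>c. c \<in> lt_set a \<Longrightarrow> P c) \<Longrightarrow> P a"
  shows "P a"
proof (induction a rule: wf_induct[OF wf_W_strict])
  case (1 a)
  then have IH: "\<And>c. c \<in> lt_set a \<Longrightarrow> P c" using lt_set_iff by blast
  show ?case
  proof (cases "\<exists>c. is_succ_of a c")
    case True
    then obtain c where "is_succ_of a c" by blast
    then show ?thesis using succ IH is_succ_of_pred_ord(2) by blast
  qed (use zero limit IH in blast)
qed

lemma Diter_unfold:
  "Diter S a = (if lt_set a = {} then clTr S
      else if (\<exists>c. is_succ_of a c) then Diie (Diter S (pred_ord a))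
      else \<Inter> (Diter S ` lt_set a))"
proof -
  let ?F = "\<lambda>F a. if lt_set a = {} then clTr S
      else if (\<exists>c. is_succ_of a c) then Diie (F (pred_ord a))
      else \<Inter> (F ` lt_set a)"
  have "adm_wf (W - Id) ?F"
    unfolding adm_wf_def
  proof (intro allI impI)
    fix f g :: "nat set \<Rightarrow> nat list set" and x
    assume "\<forall>z. (z, x) \<in> W - Id \<longrightarrow> f z = g z"
    then have fg: "\<And>z. z \<in> lt_set x \<Longrightarrow> f z = g z" using lt_set_iff by blast
    then have "(\<exists>c. is_succ_of x c) \<Longrightarrow> f (pred_ord x) = g (pred_ord x)"
      using is_succ_of_pred_ord by metis
    with fg show "?F f x = ?F g x" by auto
  qed
  then have "Diter S = ?F (Diter S)" unfolding Diter_def by (rule wfrec_fixpoint[OF wf_W_strict])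
  then show ?thesis by (rule fun_cong)
qed

lemma Brooms_unfold:
  "Brooms a = (\<Union> (Brooms ` lt_set a)) \<union>
      (if lt_set a = {} then {{[]}}
       else if odd (fin_part a) then {hcat h B | h B. B \<in> Brooms (pred_ord a)}
       else {(\<Union>n. hcat (f n) (Bs n)) | f Bs. forking f \<and> (\<forall>n. Bs n \<in> \<Union> (Brooms ` lt_set a))})"
proof -
  let ?F = "\<lambda>F a. (\<Union> (F ` lt_set a)) \<union>
      (if lt_set a = {} then {{[]}}
       else if odd (fin_part a) then {hcat h B | h B. B \<in> F (pred_ord a)}
       else {(\<Union>n. hcat (f n) (Bs n)) | f Bs. forking f \<and> (\<forall>n. Bs n \<in> \<Union> (F ` lt_set a))})"
  have "adm_wf (W - Id) ?F"
    unfolding adm_wf_def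
  proof (intro allI impI)
    fix f g :: "nat set \<Rightarrow> nat list set set" and x
    assume "\<forall>z. (z, x) \<in> W - Id \<longrightarrow> f z = g z"
    then have fg: "\<And>z. z \<in> lt_set x \<Longrightarrow> f z = g z" using lt_set_iff by blast
    have "f (pred_ord x) = g (pred_ord x)" if "lt_set x \<noteq> {}" "odd (fin_part x)"
      using that fg lt_set_Field odd_fin_part_succ(1) is_succ_of_pred_ord(2) by blast
    with fg show "?F f x = ?F g x" by auto
  qed
  then have "Brooms = ?F Brooms" unfolding Brooms_def by (rule wfrec_fixpoint[OF wf_W_strict])
  then show ?thesis by (rule fun_cong)
qed

lemma Brooms_cases:
  assumes "B \<in> Brooms a"
  obtains (lower) c where "c \<in> lt_set a" "B \<in> Brooms c"
  | (zero) "lt_set a = {}" "B = {[]}"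
  | (succ) h B' where "lt_set a \<noteq> {}" "odd (fin_part a)" "B = hcat h B'" "B' \<in> Brooms (pred_ord a)"
  | (fork) f Bs where "lt_set a \<noteq> {}" "even (fin_part a)" "forking f" "B = (\<Union>n. hcat (f n) (Bs n))"
      "\<And>n. \<exists>c\<in>lt_set a. Bs n \<in> Brooms c"
  using assms Brooms_unfold[of a] by (auto split: if_splits)

section \<open>Prefix-closed sets and the derivative\<close>

definition prefix_closed :: "nat list set \<Rightarrow> bool" where
  "prefix_closed T \<longleftrightarrow> (\<forall>t\<in>T. \<forall>k. take k t \<in> T)"

lemma clTr_prefix_closed: "prefix_closed T \<Longrightarrow> clTr T = T"
  unfolding prefix_closed_def clTr_def by (auto, metis take_all_iff order_refl)

lemma subset_clTr: "S \<subseteq> clTr S"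
  unfolding clTr_def by (auto, metis take_all_iff order_refl)

lemma prefix_closed_clTr: "prefix_closed (clTr S)"
  unfolding prefix_closed_def clTr_def by (auto, metis take_take)

lemma clTr_mono: "S \<subseteq> T \<Longrightarrow> clTr S \<subseteq> clTr T"
  unfolding clTr_def by blast

lemma clTr_UN: "clTr (\<Union>n. A n) = (\<Union>n. clTr (A n))"
  unfolding clTr_def by blast

lemma finite_clTr:
  assumes "finite S"
  shows "finite (clTr S)"
proof -
  have "clTr S \<subseteq> (\<Union>s\<in>S. (\<lambda>k. take k s) ` {..length s})"
  proof
    fix t assume "t \<in> clTr S"
    then obtain s k where "s \<in> S" "t = take k s" unfolding clTr_def by blast
    then show "t \<in> (\<Union>s\<in>S. (\<lambda>k. take k s) ` {..length s})"
      by (intro UN_I[of s]) (auto intro: image_eqI[of _ _ "min k (length s)"] simp: min_def)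
  qed
  moreover have "finite (\<Union>s\<in>S. (\<lambda>k. take k s) ` {..length s})" using assms by blast
  ultimately show ?thesis using finite_subset by blast
qed

lemma prefix_closed_Nil_mem: "prefix_closed T \<Longrightarrow> T \<noteq> {} \<Longrightarrow> [] \<in> T"
  unfolding prefix_closed_def by (metis ex_in_conv take_0)

lemma prefix_closed_INT: "(\<And>i. i \<in> I \<Longrightarrow> prefix_closed (X i)) \<Longrightarrow> prefix_closed (\<Inter>i\<in>I. X i)"
  unfolding prefix_closed_def by blast

lemma Diie_treeI:
  assumes "t \<in> T" "E \<subseteq> T" "infinite E" "\<And>e. e \<in> E \<Longrightarrow> prefix t e"
    "\<And>x y. x \<in> E \<Longrightarrow> y \<in> E \<Longrightarrow> x \<noteq> y \<Longrightarrow> \<not> prefix x y" "inj_on length E"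
  shows "t \<in> Diie_tree T"
  unfolding Diie_tree_def using assms by blast

lemma Diie_tree_subset: "Diie_tree T \<subseteq> T"
  unfolding Diie_tree_def by blast

lemma Diie_tree_mono:
  assumes "S \<subseteq> T"
  shows "Diie_tree S \<subseteq> Diie_tree T"
proof
  fix t assume "t \<in> Diie_tree S"
  then obtain E where "t \<in> S" "E \<subseteq> S" "infinite E" "\<forall>e \<in> E. prefix t e"
      "\<forall>x \<in> E. \<forall>y \<in> E. x \<noteq> y \<longrightarrow> \<not> prefix x y \<and> \<not> prefix y x" "inj_on length E"
    unfolding Diie_tree_def by blast
  moreover from this have "t \<in> T" "E \<subseteq> T" using assms by auto
  ultimately show "t \<in> Diie_tree T" unfolding Diie_tree_def by blast
qed

lemma Diie_tree_finite:
  assumes "finite T"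
  shows "Diie_tree T = {}"
proof -
  have "\<not> (E \<subseteq> T \<and> infinite E)" for E using assms finite_subset by blast
  then show ?thesis unfolding Diie_tree_def by blast
qed

lemma prefix_closed_Diie_tree:
  assumes "prefix_closed T"
  shows "prefix_closed (Diie_tree T)"
  unfolding prefix_closed_def
proof (intro ballI allI)
  fix t k assume "t \<in> Diie_tree T"
  then obtain E where t: "t \<in> T" "E \<subseteq> T" "infinite E" "\<forall>e \<in> E. prefix t e"
      "\<forall>x \<in> E. \<forall>y \<in> E. x \<noteq> y \<longrightarrow> \<not> prefix x y \<and> \<not> prefix y x" "inj_on length E"
    unfolding Diie_tree_def by blast
  have "\<forall>e \<in> E. prefix (take k t) e" using t(4) take_is_prefix prefix_order.trans by blast
  moreover have "take k t \<in> T" using assms t(1) unfolding prefix_closed_def by blast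
  ultimately show "take k t \<in> Diie_tree T" unfolding Diie_tree_def using t by blast
qed

lemma Diie_prefix_closed: "prefix_closed T \<Longrightarrow> Diie T = Diie_tree T"
  unfolding Diie_def using clTr_prefix_closed by simp

lemma Diter_zero: "lt_set a = {} \<Longrightarrow> Diter S a = clTr S"
  using Diter_unfold[of S a] by simp

lemma Diter_limit: "lt_set a \<noteq> {} \<Longrightarrow> \<nexists>c. is_succ_of a c \<Longrightarrow> Diter S a = \<Inter> (Diter S ` lt_set a)"
  using Diter_unfold[of S a] by auto

lemma prefix_closed_Diter: "prefix_closed (Diter S a)"
proof (induction a rule: W_induct)
  case (zero a)
  then show ?case using Diter_zero prefix_closed_clTr by simp
next
  case (succ a c)
  then have "Diter S a = Diie (Diter S c)"
    using Diter_unfold[of S a] is_succ_of_pred_ord[OF succ.hyps] by auto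
  with succ show ?case using Diie_prefix_closed prefix_closed_Diie_tree by simp
next
  case (limit a)
  then show ?case using Diter_limit prefix_closed_INT[of "lt_set a" "Diter S"] by simp
qed

lemma Diter_succ: "is_succ_of a c \<Longrightarrow> Diter S a = Diie_tree (Diter S c)"
  using Diter_unfold[of S a] is_succ_of_pred_ord[of a c] Diie_prefix_closed[OF prefix_closed_Diter]
  by auto

lemma Diter_antimono: "(c, a) \<in> W \<Longrightarrow> Diter S a \<subseteq> Diter S c"
proof (induction a arbitrary: c rule: W_induct)
  case (zero a)
  then show ?case unfolding lt_set_def by blast
next
  case (succ a p)
  show ?case
  proof (cases "c = a")
    case False
    then have "(c, p) \<in> W" using succ.prems succ.hyps unfolding is_succ_of_def lt_set_def le_set_def by blast
    then show ?thesis using succ.IH Diter_succ[OF succ.hyps] Diie_tree_subset by blast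
  qed simp
next
  case (limit a)
  show ?case
  proof (cases "c = a")
    case False
    then have "c \<in> lt_set a" using limit.prems unfolding lt_set_def by blast
    then show ?thesis using Diter_limit[OF limit.hyps] by blast
  qed simp
qed

lemma Diter_empty_above_finite:
  assumes "(p, q) \<in> W" "p \<noteq> q" "finite (Diter S p)"
  shows "Diter S q = {}"
proof -
  obtain d where d: "is_succ_of d p" "(d, q) \<in> W" using ex_succ_below[OF assms(1,2)] by blast
  have "Diter S d = {}" using Diter_succ[OF d(1)] Diie_tree_finite[OF assms(3)] by simp
  then show ?thesis using Diter_antimono[OF d(2)] by blast
qed

lemma Diter_clTr: "Diter (clTr S) a = Diter S a"
proof (induction a rule: W_induct)
  case (zero a)
  then show ?case using Diter_zero clTr_prefix_closed[OF prefix_closed_clTr] by simp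
next
  case (succ a c)
  then show ?case using Diter_succ by simp
next
  case (limit a)
  then show ?case using Diter_limit by simp
qed

section \<open>Derivatives of \<open>h\<^sup>\<frown>B\<close>\<close>

lemma hcat_mono: "S \<subseteq> T \<Longrightarrow> hcat h S \<subseteq> hcat h T"
  unfolding hcat_def by blast

lemma append_mem_clTr_hcat: "s \<in> Y \<Longrightarrow> h @ s \<in> clTr (hcat h Y)"
  unfolding clTr_def hcat_def by (metis (mono_tags, lifting) mem_Collect_eq take_all_iff order_refl)

lemma prefix_mem_clTr_hcat:
  assumes "prefix t h" "Y \<noteq> {}"
  shows "t \<in> clTr (hcat h Y)"
proof -
  obtain y where y: "y \<in> Y" using assms by blast
  obtain zs where "h = t @ zs" using assms(1) prefix_def by blast
  then have "t = take (length t) (h @ y)" by simp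
  then show ?thesis unfolding clTr_def hcat_def using y by blast
qed

lemma clTr_hcat_cases:
  assumes "prefix_closed X" "t \<in> clTr (hcat h X)"
  shows "(\<exists>s\<in>X. t = h @ s) \<or> (X \<noteq> {} \<and> prefix t h)"
proof -
  obtain x k where t: "x \<in> X" "t = take k (h @ x)" using assms(2) unfolding clTr_def hcat_def by blast
  show ?thesis
  proof (cases "k \<le> length h")
    case True
    then have "t = take k h" using t by simp
    then show ?thesis using t(1) take_is_prefix by blast
  next
    case False
    then have "t = h @ take (k - length h) x" using t by simp
    moreover have "take (k - length h) x \<in> X" using assms(1) t(1) unfolding prefix_closed_def by blast
    ultimately show ?thesis by blast
  qed
qed

lemma clTr_hcat_longD:
  assumes "prefix_closed X" "t \<in> clTr (hcat h X)" "length h \<le> length t"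
  shows "\<exists>s\<in>X. t = h @ s"
  using clTr_hcat_cases[OF assms(1,2)]
proof
  assume *: "X \<noteq> {} \<and> prefix t h"
  then have "t = h @ []"
    using assms(3) prefix_length_less prefix_order.le_less by (metis append_Nil2 not_le)
  moreover have "[] \<in> X" using * assms(1) prefix_closed_Nil_mem by blast
  ultimately show ?thesis by blast
qed

lemma infinite_longer_elements:
  assumes "infinite E" "inj_on length E"
  shows "infinite {e \<in> E. n < length e}"
proof -
  have "finite {e \<in> E. length e \<le> n}"
    by (rule inj_on_finite[of length _ "{..n}"]) (auto intro: inj_on_subset[OF assms(2)])
  moreover have "E \<subseteq> {e \<in> E. n < length e} \<union> {e \<in> E. length e \<le> n}" by auto
  ultimately show ?thesis using assms(1) by (meson finite_UnI finite_subset)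
qed

lemma mem_Diie_tree_drop_prefix:
  assumes E: "E \<subseteq> {h @ x | x. x \<in> X}" "infinite E" "\<forall>e\<in>E. prefix (h @ s) e"
    "\<forall>x \<in> E. \<forall>y \<in> E. x \<noteq> y \<longrightarrow> \<not> prefix x y \<and> \<not> prefix y x" "inj_on length E"
    and s: "s \<in> X"
  shows "s \<in> Diie_tree X"
proof -
  let ?d = "drop (length h)"
  have eh: "e = h @ ?d e" if "e \<in> E" for e using E(1) that by auto
  then have inj: "inj_on ?d E" unfolding inj_on_def by metis
  let ?E = "?d ` E"
  have "?E \<subseteq> X" using E(1) by auto
  moreover have "infinite ?E" using E(2) inj finite_image_iff by blast
  moreover have "\<forall>e \<in> ?E. prefix s e" using E(3) eh by (metis imageE same_prefix_prefix)
  moreover have "\<forall>x \<in> ?E. \<forall>y \<in> ?E. x \<noteq> y \<longrightarrow> \<not> prefix x y \<and> \<not> prefix y x"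
    using E(4) eh same_prefix_prefix by (smt (verit, ccfv_threshold) imageE)
  moreover have "inj_on length ?E"
  proof (rule inj_onI)
    fix x y assume "x \<in> ?E" "y \<in> ?E" "length x = length y"
    then obtain ex ey where "ex \<in> E" "ey \<in> E" "x = ?d ex" "y = ?d ey" "length ex = length ey"
      using eh by (metis imageE length_append)
    then show "x = y" using E(5) unfolding inj_on_def by metis
  qed
  ultimately show ?thesis unfolding Diie_tree_def using s by blast
qed

lemma Diie_tree_clTr_hcat:
  assumes X: "prefix_closed X"
  shows "Diie_tree (clTr (hcat h X)) \<subseteq> clTr (hcat h (Diie_tree X))"
proof
  fix t assume "t \<in> Diie_tree (clTr (hcat h X))"
  then obtain E where t: "t \<in> clTr (hcat h X)" "E \<subseteq> clTr (hcat h X)" "infinite E" "\<forall>e \<in> E. prefix t e"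
      and E: "\<forall>x \<in> E. \<forall>y \<in> E. x \<noteq> y \<longrightarrow> \<not> prefix x y \<and> \<not> prefix y x" "inj_on length E"
    unfolding Diie_tree_def by blast
  have long: "{e \<in> E. length h \<le> length e} \<subseteq> {h @ x | x. x \<in> X}"
    using clTr_hcat_longD[OF X] t(2) by blast
  show "t \<in> clTr (hcat h (Diie_tree X))"
  proof (cases "prefix h t")
    case True
    then obtain s where s: "s \<in> X" "t = h @ s" using clTr_hcat_longD[OF X t(1)] prefix_length_le by blast
    have "E \<subseteq> {e \<in> E. length h \<le> length e}" using t(4) s(2) prefix_length_le by fastforce
    then have "s \<in> Diie_tree X" using mem_Diie_tree_drop_prefix[of E h X s] long t s E by blast
    then show ?thesis using s(2) append_mem_clTr_hcat by blast
  next
    case False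
    text \<open>Then \<open>t\<close> is a proper prefix of \<open>h\<close>, and the elements of \<open>E\<close> longer than \<open>h\<close>
      witness \<open>[] \<in> D\<^sub>i\<^sub>i\<^sub>e(X)\<close>.\<close>
    then have pt: "prefix t h" using clTr_hcat_cases[OF X t(1)] prefixI by blast
    let ?E = "{e \<in> E. length h < length e}"
    have inf: "infinite ?E" using infinite_longer_elements[OF t(3) E(2)] .
    have sub: "?E \<subseteq> {h @ x | x. x \<in> X}" using long by auto
    obtain e where "e \<in> ?E" using inf by (metis (no_types, lifting) finite.emptyI ex_in_conv)
    then have "X \<noteq> {}" using sub by blast
    then have "[] \<in> X" using X prefix_closed_Nil_mem by blast
    moreover have "\<forall>e\<in>?E. prefix (h @ []) e" using sub by auto
    moreover have "inj_on length ?E" by (rule inj_on_subset[OF E(2)]) auto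
    ultimately have "[] \<in> Diie_tree X" using mem_Diie_tree_drop_prefix[OF sub inf] E(1) by blast
    then show ?thesis using prefix_mem_clTr_hcat[OF pt] by blast
  qed
qed

lemma INT_clTr_hcat:
  assumes I: "I \<noteq> {}" and X: "\<And>i. i \<in> I \<Longrightarrow> prefix_closed (X i)"
  shows "(\<Inter>i\<in>I. clTr (hcat h (X i))) \<subseteq> clTr (hcat h (\<Inter>i\<in>I. X i))"
proof
  fix t assume t: "t \<in> (\<Inter>i\<in>I. clTr (hcat h (X i)))"
  show "t \<in> clTr (hcat h (\<Inter>i\<in>I. X i))"
  proof (cases "prefix h t")
    case True
    then obtain s where s: "t = h @ s" by (auto simp: prefix_def)
    have "\<exists>s\<in>X i. t = h @ s" if "i \<in> I" for i
      using clTr_hcat_longD[OF X[OF that]] t that True prefix_length_le by blast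
    then have "s \<in> (\<Inter>i\<in>I. X i)" using s by auto
    then show ?thesis using s append_mem_clTr_hcat by blast
  next
    case False
    then have "X i \<noteq> {} \<and> prefix t h" if "i \<in> I" for i
      using clTr_hcat_cases[OF X[OF that]] t that prefixI by blast
    then have "[] \<in> (\<Inter>i\<in>I. X i)" "prefix t h" using X prefix_closed_Nil_mem I by blast+
    then show ?thesis using prefix_mem_clTr_hcat by blast
  qed
qed

lemma Diter_hcat: "Diter (hcat h B) a \<subseteq> clTr (hcat h (Diter B a))"
proof (induction a rule: W_induct)
  case (zero a)
  then show ?case using Diter_zero clTr_mono hcat_mono subset_clTr by metis
next
  case (succ a c)
  have "Diter (hcat h B) a = Diie_tree (Diter (hcat h B) c)" using Diter_succ[OF succ.hyps] .
  also have "\<dots> \<subseteq> Diie_tree (clTr (hcat h (Diter B c)))" using Diie_tree_mono[OF succ.IH] .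
  also have "\<dots> \<subseteq> clTr (hcat h (Diie_tree (Diter B c)))"
    using Diie_tree_clTr_hcat[OF prefix_closed_Diter] .
  also have "\<dots> = clTr (hcat h (Diter B a))" using Diter_succ[OF succ.hyps] by simp
  finally show ?case .
next
  case (limit a)
  have "Diter (hcat h B) a \<subseteq> (\<Inter>c\<in>lt_set a. clTr (hcat h (Diter B c)))"
    using Diter_limit[OF limit.hyps] limit.IH by blast
  also have "\<dots> \<subseteq> clTr (hcat h (\<Inter>c\<in>lt_set a. Diter B c))"
    using INT_clTr_hcat[OF limit.hyps(1)] prefix_closed_Diter by blast
  also have "\<dots> = clTr (hcat h (Diter B a))" using Diter_limit[OF limit.hyps] by simp
  finally show ?case .
qed

section \<open>Derivatives of forking unions\<close>

text \<open>The tree closure of \<open>\<Union>\<^sub>n f\<^sub>n\<^sup>\<frown>X\<^sub>n\<close>, with the root added so that it stays nonempty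
  when every \<open>X\<^sub>n\<close> is empty.\<close>

definition fork_tree :: "(nat \<Rightarrow> nat list) \<Rightarrow> (nat \<Rightarrow> nat list set) \<Rightarrow> nat list set" where
  "fork_tree f X = insert [] (\<Union>n. clTr (hcat (f n) (X n)))"

lemma forking_nth0_inj: "forking f \<Longrightarrow> f n ! 0 = f m ! 0 \<Longrightarrow> n = m"
  unfolding forking_def by blast

lemma clTr_hcat_nth0:
  assumes "h \<noteq> []" "u \<in> clTr (hcat h Y)" "u \<noteq> []"
  shows "u ! 0 = h ! 0"
proof -
  obtain y k where u: "u = take k (h @ y)" using assms(2) unfolding clTr_def hcat_def by blast
  then have "k > 0" using assms(3) by (cases k) auto
  then show ?thesis using assms(1) unfolding u by (simp add: nth_append)
qed

lemma fork_tree_branch: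
  assumes f: "forking f" and t: "t \<in> fork_tree f X" "t \<noteq> []"
  shows "\<exists>n. t \<in> clTr (hcat (f n) (X n)) \<and> t ! 0 = f n ! 0"
proof -
  obtain n where n: "t \<in> clTr (hcat (f n) (X n))" using t unfolding fork_tree_def by blast
  have "f n \<noteq> []" using f unfolding forking_def by blast
  then show ?thesis using clTr_hcat_nth0 n t(2) by blast
qed

lemma Diie_tree_fork_tree:
  assumes f: "forking f" and X: "\<And>n. prefix_closed (X n)"
  shows "Diie_tree (fork_tree f X) \<subseteq> fork_tree f (\<lambda>n. Diie_tree (X n))"
proof
  fix t assume "t \<in> Diie_tree (fork_tree f X)"
  then obtain E where t: "t \<in> fork_tree f X" "E \<subseteq> fork_tree f X" "infinite E" "\<forall>e \<in> E. prefix t e"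
      "\<forall>x \<in> E. \<forall>y \<in> E. x \<noteq> y \<longrightarrow> \<not> prefix x y \<and> \<not> prefix y x" "inj_on length E"
    unfolding Diie_tree_def by blast
  show "t \<in> fork_tree f (\<lambda>n. Diie_tree (X n))"
  proof (cases "t = []")
    case True
    then show ?thesis unfolding fork_tree_def by blast
  next
    case False
    obtain n where n: "t \<in> clTr (hcat (f n) (X n))" "t ! 0 = f n ! 0"
      using fork_tree_branch[OF f t(1) False] by blast
    text \<open>All extensions of \<open>t\<close> start with \<open>t ! 0\<close>, so they stay in the \<open>n\<close>-th branch.\<close>
    have "E \<subseteq> clTr (hcat (f n) (X n))"
    proof
      fix e assume e: "e \<in> E"
      then have "prefix t e" using t(4) by blast
      then have ne: "e \<noteq> []" and e0: "e ! 0 = t ! 0" using False by (auto simp: prefix_def nth_append)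
      obtain m where m: "e \<in> clTr (hcat (f m) (X m))" "e ! 0 = f m ! 0"
        using fork_tree_branch[OF f _ ne] t(2) e by blast
      then have "m = n" using forking_nth0_inj[OF f] e0 n(2) by simp
      then show "e \<in> clTr (hcat (f n) (X n))" using m(1) by simp
    qed
    then have "t \<in> Diie_tree (clTr (hcat (f n) (X n)))" unfolding Diie_tree_def using t n by blast
    then have "t \<in> clTr (hcat (f n) (Diie_tree (X n)))" using Diie_tree_clTr_hcat[OF X] by blast
    then show ?thesis unfolding fork_tree_def by blast
  qed
qed

lemma INT_fork_tree:
  assumes I: "I \<noteq> {}" and f: "forking f" and X: "\<And>i n. i \<in> I \<Longrightarrow> prefix_closed (X i n)"
  shows "(\<Inter>i\<in>I. fork_tree f (X i)) \<subseteq> fork_tree f (\<lambda>n. \<Inter>i\<in>I. X i n)"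
proof
  fix t assume t: "t \<in> (\<Inter>i\<in>I. fork_tree f (X i))"
  show "t \<in> fork_tree f (\<lambda>n. \<Inter>i\<in>I. X i n)"
  proof (cases "t = []")
    case True
    then show ?thesis unfolding fork_tree_def by blast
  next
    case False
    obtain i0 where "i0 \<in> I" using I by blast
    then have "t \<in> fork_tree f (X i0)" using t by blast
    then obtain n where n: "t ! 0 = f n ! 0" using fork_tree_branch[OF f _ False] by blast
    have "t \<in> clTr (hcat (f n) (X i n))" if "i \<in> I" for i
    proof -
      have "t \<in> fork_tree f (X i)" using t that by blast
      then obtain m where m: "t \<in> clTr (hcat (f m) (X i m))" "t ! 0 = f m ! 0"
        using fork_tree_branch[OF f _ False] by blast
      then have "m = n" using forking_nth0_inj[OF f] n by simp
      then show ?thesis using m(1) by simp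
    qed
    then have "t \<in> clTr (hcat (f n) (\<Inter>i\<in>I. X i n))"
      using INT_clTr_hcat[OF I, of "\<lambda>i. X i n"] X by blast
    then show ?thesis unfolding fork_tree_def by blast
  qed
qed

lemma Diter_forking_union:
  assumes f: "forking f"
  shows "Diter (\<Union>n. hcat (f n) (Bs n)) a \<subseteq> fork_tree f (\<lambda>n. Diter (Bs n) a)"
proof (induction a rule: W_induct)
  case (zero a)
  have "Diter (\<Union>n. hcat (f n) (Bs n)) a = (\<Union>n. clTr (hcat (f n) (Bs n)))"
    using Diter_zero[OF zero] clTr_UN by simp
  also have "\<dots> \<subseteq> (\<Union>n. clTr (hcat (f n) (clTr (Bs n))))"
    using clTr_mono[OF hcat_mono[OF subset_clTr]] by (meson SUP_mono' )
  also have "\<dots> \<subseteq> fork_tree f (\<lambda>n. Diter (Bs n) a)"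
    unfolding fork_tree_def Diter_zero[OF zero] by (rule subset_insertI)
  finally show ?case .
next
  case (succ a c)
  let ?B = "\<Union>n. hcat (f n) (Bs n)"
  have "Diter ?B a = Diie_tree (Diter ?B c)" using Diter_succ[OF succ.hyps] .
  also have "\<dots> \<subseteq> Diie_tree (fork_tree f (\<lambda>n. Diter (Bs n) c))" using Diie_tree_mono[OF succ.IH] .
  also have "\<dots> \<subseteq> fork_tree f (\<lambda>n. Diie_tree (Diter (Bs n) c))"
    using Diie_tree_fork_tree[OF f prefix_closed_Diter] .
  also have "\<dots> = fork_tree f (\<lambda>n. Diter (Bs n) a)" using Diter_succ[OF succ.hyps] by simp
  finally show ?case .
next
  case (limit a)
  have "Diter (\<Union>n. hcat (f n) (Bs n)) a \<subseteq> (\<Inter>c\<in>lt_set a. fork_tree f (\<lambda>n. Diter (Bs n) c))"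
    using Diter_limit[OF limit.hyps] limit.IH by blast
  also have "\<dots> \<subseteq> fork_tree f (\<lambda>n. \<Inter>c\<in>lt_set a. Diter (Bs n) c)"
    by (rule INT_fork_tree[OF limit.hyps(1) f prefix_closed_Diter])
  also have "\<dots> = fork_tree f (\<lambda>n. Diter (Bs n) a)" using Diter_limit[OF limit.hyps] by simp
  finally show ?case .
qed

section \<open>Derivatives of brooms\<close>

lemma Diter_prime_ord_of_lower:
  assumes ca: "(c, a) \<in> W" "c \<noteq> a" and fin: "finite (Diter B (prime_ord c))"
  shows "finite (Diter B (prime_ord a))"
    and "even (fin_part a) \<Longrightarrow> Diter B (prime_ord a) = {}"
proof -
  have "Diter B (prime_ord a) \<subseteq> Diter B (prime_ord c)"
    using Diter_antimono[OF prime_ord_mono(1)[OF ca(1)]] .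
  then show "finite (Diter B (prime_ord a))" using fin finite_subset by blast
  show "even (fin_part a) \<Longrightarrow> Diter B (prime_ord a) = {}"
    using Diter_empty_above_finite[OF prime_ord_mono(1)[OF ca(1)] _ fin] prime_ord_mono(2)[OF ca] by blast
qed

theorem Diter_prime_ord_Brooms:
  assumes "a \<in> Field W" "B \<in> Brooms a"
  shows "finite (Diter B (prime_ord a)) \<and> (even (fin_part a) \<longrightarrow> Diter B (prime_ord a) \<subseteq> {[]})"
  using assms
proof (induction a arbitrary: B rule: wf_induct[OF wf_W_strict])
  case (1 a)
  have aF: "a \<in> Field W" using 1(2) .
  have IH: "finite (Diter B' (prime_ord c)) \<and> (even (fin_part c) \<longrightarrow> Diter B' (prime_ord c) \<subseteq> {[]})"
    if "c \<in> lt_set a" "B' \<in> Brooms c" for c B'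
    using 1(1) that lt_set_iff W_FieldI1 unfolding lt_set_def by blast
  have of_lower: "finite (Diter B' (prime_ord a))" "even (fin_part a) \<Longrightarrow> Diter B' (prime_ord a) = {}"
    if "c \<in> lt_set a" "B' \<in> Brooms c" for c B'
    using Diter_prime_ord_of_lower[of c a B'] IH[OF that] that(1) unfolding lt_set_def by auto
  from 1(3) show ?case
  proof (cases rule: Brooms_cases)
    case (lower c)
    then show ?thesis using of_lower by blast
  next
    case zero
    then show ?thesis
      using zero_ord_props[OF aF] Diter_zero clTr_prefix_closed[of "{[]}"]
      unfolding prefix_closed_def by simp
  next
    case (succ h B')
    note p = odd_fin_part_succ[OF aF succ(2)]
    have "Diter B' (prime_ord a) \<subseteq> {[]}"
      using IH[OF is_succ_of_pred_ord(2)[OF p(1)] succ(4)] p(2,3) by simp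
    then have "Diter B (prime_ord a) \<subseteq> clTr (hcat h {[]})"
      using Diter_hcat[of h B' "prime_ord a"] succ(3) clTr_mono[OF hcat_mono] by blast
    moreover have "finite (clTr (hcat h {[]}))" by (rule finite_clTr) (simp add: hcat_def)
    ultimately show ?thesis using succ(2) finite_subset by blast
  next
    case (fork f Bs)
    have "Diter (Bs n) (prime_ord a) = {}" for n using fork(2,5) of_lower by blast
    then have "fork_tree f (\<lambda>n. Diter (Bs n) (prime_ord a)) = {[]}"
      unfolding fork_tree_def clTr_def hcat_def by simp
    then have "Diter B (prime_ord a) \<subseteq> {[]}"
      using Diter_forking_union[OF fork(3), of Bs "prime_ord a"] unfolding fork(4) by simp
    then show ?thesis by (simp add: finite_subset)
  qed
qed

section \<open>Broom extensions\<close>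

lemma map_conc_upt: "k \<le> length u \<Longrightarrow> map (conc u \<nu>) [0..<k] = take k u"
  by (rule nth_equalityI) (auto simp: conc_def)

lemma map_upt_append: "i \<le> j \<Longrightarrow> map g [0..<j] = map g [0..<i] @ map g [i..<j]"
  by (metis le_add_diff_inverse map_append upt_add_eq_append zero_le)

lemma take_map_upt: "take j (map g [0..<k]) = map g [0..<min j k]"
  by (rule nth_equalityI) auto

lemma prefix_map_upt_cases:
  "prefix (map g [0..<i]) (map g [0..<j]) \<or> prefix (map g [0..<j]) (map g [0..<i])"
  using map_upt_append[of i j g] map_upt_append[of j i g] prefixI by (cases "i \<le> j") auto

lemma prefix_map_upt: "prefix t (map g [0..<k]) \<Longrightarrow> t = map g [0..<length t]"
  using take_map_upt[of "length t" g k] prefix_length_le by (metis length_map diff_zero length_upt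
      min_absorb1 prefix_def append_eq_conv_conj)

lemma prefix_closed_clTr_inf: "prefix_closed (clTr_inf A)"
  unfolding prefix_closed_def clTr_inf_def using take_map_upt by blast

locale broom_extension =
  fixes B :: "nat list set" and f :: "nat list \<Rightarrow> nat \<Rightarrow> nat list"
    and \<nu> :: "nat list \<Rightarrow> nat \<Rightarrow> nat \<Rightarrow> nat"
  assumes forking_f: "\<And>s. s \<in> B \<Longrightarrow> forking (f s)"
begin

definition branch :: "nat list \<Rightarrow> nat \<Rightarrow> nat \<Rightarrow> nat" where
  "branch s n = conc (s @ f s n) (\<nu> s n)"

definition branches :: "(nat \<Rightarrow> nat) set" where
  "branches = {branch s n | s n. s \<in> B}"

lemma branch_init: "map (branch s n) [0..<length s] = s"
  unfolding branch_def by (subst map_conc_upt) auto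

lemma branch_at_length: "s \<in> B \<Longrightarrow> branch s n (length s) = f s n ! 0"
  using forking_f unfolding branch_def conc_def forking_def by (simp add: nth_append)

lemma branch_init_mem_clTr_inf: "s \<in> B \<Longrightarrow> map (branch s n) [0..<k] \<in> clTr_inf branches"
  unfolding clTr_inf_def branches_def by blast

text \<open>The branches through \<open>s \<in> B\<close>, cut one step after their splitting point \<open>s\<close> and
  \<open>n\<close> steps later still, witness \<open>s \<in> D\<^sub>i\<^sub>i\<^sub>e(A)\<close>.\<close>

lemma mem_Diie_inf_branches:
  assumes s: "s \<in> B"
  shows "s \<in> Diie_inf branches"
proof -
  define e where "e n = map (branch s n) [0..<length s + 1 + n]" for n
  have e_len: "length (e n) = length s + 1 + n" for n unfolding e_def by simp
  have "e n = s @ map (branch s n) [length s..<length s + 1 + n]" for n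
    using map_upt_append[of "length s" "length s + 1 + n" "branch s n"] branch_init
    unfolding e_def by simp
  then have e_prefix: "prefix s (e n)" for n by (metis prefixI)
  have e_nth: "e n ! length s = f s n ! 0" for n
    unfolding e_def using branch_at_length[OF s] by (simp del: upt_Suc)
  show ?thesis
    unfolding Diie_inf_def
  proof (rule Diie_treeI[of _ _ "range e"])
    show "s \<in> clTr_inf branches"
      using branch_init_mem_clTr_inf[OF s, of _ "length s"] branch_init by metis
    show "range e \<subseteq> clTr_inf branches"
      using branch_init_mem_clTr_inf[OF s] unfolding e_def by blast
    have "inj e" by (rule injI) (metis e_len add_left_cancel)
    then show "infinite (range e)" using finite_imageD by blast
    show "inj_on length (range e)" by (rule inj_onI) (auto simp: e_len)
    show "\<And>x. x \<in> range e \<Longrightarrow> prefix s x" using e_prefix by blast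
    have "\<not> prefix (e n) (e m)" if "n \<noteq> m" for n m
    proof
      assume "prefix (e n) (e m)"
      then have "e n ! length s = e m ! length s" by (auto simp: prefix_def nth_append e_len)
      then show False using e_nth forking_nth0_inj[OF forking_f[OF s]] that by metis
    qed
    then show "\<And>x y. x \<in> range e \<Longrightarrow> y \<in> range e \<Longrightarrow> x \<noteq> y \<Longrightarrow> \<not> prefix x y" by (auto, metis)
  qed
qed

lemma clTr_subset_Diie_inf: "clTr B \<subseteq> Diie_inf branches"
  using mem_Diie_inf_branches prefix_closed_Diie_tree[OF prefix_closed_clTr_inf]
  unfolding Diie_inf_def clTr_def prefix_closed_def by blast

text \<open>A sequence outside the tree of \<open>B\<close> lies on the branch \<open>branch s n\<close> only beyond its
  splitting point \<open>s\<close>, and then \<open>n\<close> is determined by \<open>s\<close> and the sequence.\<close>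

lemma branch_through_non_member:
  assumes t: "t \<notin> clTr B" "t = map (branch s n) [0..<length t]" and s: "s \<in> B"
  shows "length s < length t" "s = take (length s) t" "t ! length s = f s n ! 0"
proof -
  show ls: "length s < length t"
  proof (rule ccontr)
    assume "\<not> length s < length t"
    then have "t = take (length t) s" using t(2) unfolding branch_def by (simp add: map_conc_upt)
    then show False using t(1) s unfolding clTr_def by blast
  qed
  have "t = s @ map (branch s n) [length s..<length t]"
    using t(2) map_upt_append[of "length s" "length t" "branch s n"] ls branch_init by simp
  then show "s = take (length s) t" by (metis append_eq_conv_conj)
  have "map (branch s n) [0..<length t] ! length s = branch s n (length s)" using ls by simp
  then show "t ! length s = f s n ! 0" using t(2) branch_at_length[OF s] by metis
qed

lemma finite_splitting_indices:
  "finite {(s, n). s \<in> B \<and> length s < length t \<and> s = take (length s) t \<and> t ! length s = f s n ! 0}"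
proof -
  let ?M = "\<lambda>j. {n. take j t \<in> B \<and> t ! j = f (take j t) n ! 0}"
  have "finite (?M j)" for j
  proof (cases "take j t \<in> B")
    case True
    then have "inj (\<lambda>n. f (take j t) n ! 0)" using forking_nth0_inj[OF forking_f] by (meson injI)
    then have "finite ((\<lambda>n. f (take j t) n ! 0) -` {t ! j})" by (rule finite_vimageI[rotated]) simp
    then show ?thesis by (rule finite_subset[rotated]) auto
  qed simp
  then have "finite (\<Union>j<length t. {take j t} \<times> ?M j)" by blast
  moreover have "{(s, n). s \<in> B \<and> length s < length t \<and> s = take (length s) t \<and> t ! length s = f s n ! 0}
      \<subseteq> (\<Union>j<length t. {take j t} \<times> ?M j)" by auto
  ultimately show ?thesis using finite_subset by blast
qed

lemma Diie_inf_subset_clTr: "Diie_inf branches \<subseteq> clTr B"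
proof
  fix t assume "t \<in> Diie_inf branches"
  then obtain E where E: "E \<subseteq> clTr_inf branches" "infinite E" "\<forall>e \<in> E. prefix t e"
      "\<forall>x \<in> E. \<forall>y \<in> E. x \<noteq> y \<longrightarrow> \<not> prefix x y \<and> \<not> prefix y x"
    unfolding Diie_inf_def Diie_tree_def by blast
  show "t \<in> clTr B"
  proof (rule ccontr)
    assume t: "t \<notin> clTr B"
    let ?P = "{(s, n). s \<in> B \<and> length s < length t \<and> s = take (length s) t \<and> t ! length s = f s n ! 0}"
    have "\<forall>e\<in>E. \<exists>p. p \<in> ?P \<and> e = map (case_prod branch p) [0..<length e]"
    proof
      fix e assume e: "e \<in> E"
      obtain s n k where sn: "s \<in> B" "e = map (branch s n) [0..<k]"
        using E(1) e unfolding clTr_inf_def branches_def by blast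
      then have "t = map (branch s n) [0..<length t]" using E(3) e prefix_map_upt by blast
      then have "(s, n) \<in> ?P" using branch_through_non_member[OF t _ sn(1)] sn(1) by blast
      moreover have "e = map (branch s n) [0..<length e]" using sn(2) by simp
      ultimately show "\<exists>p. p \<in> ?P \<and> e = map (case_prod branch p) [0..<length e]" by auto
    qed
    then obtain g where g: "\<forall>e\<in>E. g e \<in> ?P \<and> e = map (case_prod branch (g e)) [0..<length e]"
      by (rule bchoice[elim_format]) blast
    text \<open>Two elements of \<open>E\<close> on the same branch would be comparable.\<close>
    have "inj_on g E"
    proof (rule inj_onI)
      fix x y assume xy: "x \<in> E" "y \<in> E" "g x = g y"
      then have "x = map (case_prod branch (g x)) [0..<length x]"
          "y = map (case_prod branch (g x)) [0..<length y]" using g by auto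
      then have "prefix x y \<or> prefix y x" using prefix_map_upt_cases by metis
      then show "x = y" using E(4) xy(1,2) by blast
    qed
    then have "finite E"
      using g finite_splitting_indices[of t] by (meson finite_imageD finite_subset image_subsetI)
    then show False using E(2) by blast
  qed
qed

lemma Diie_inf_branches: "Diie_inf branches = clTr B"
  using clTr_subset_Diie_inf Diie_inf_subset_clTr by blast

end

lemma Diie_inf_broom_ext: "broom_ext A B \<Longrightarrow> Diie_inf A = clTr B"
proof -
  assume "broom_ext A B"
  then obtain f \<nu> where f: "\<And>s. s \<in> B \<Longrightarrow> forking (f s)"
    and A: "A = {conc (s @ f s n) (\<nu> s n) | s n. s \<in> B}"
    unfolding broom_ext_def by blast
  interpret broom_extension B f \<nu> using f by unfold_locales
  have "A = branches" unfolding A branches_def branch_def ..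
  then show ?thesis using Diie_inf_branches by simp
qed

lemma DiterO_clTr: "DiterO (clTr S) x = DiterO S x"
  unfolding DiterO_def using Diter_clTr by (simp split: option.split)

text \<open>At \<open>\<omega>\<^sub>1\<close> the derivative of a broom is empty: it lies in \<open>\<B>\<^sub>a\<close> for a countable \<open>a\<close>,
  and \<open>D\<^sup>a'\<close> is already finite.\<close>

lemma DiterO_omega1_Brooms:
  assumes "B \<in> BroomsO None"
  shows "DiterO B None = {}"
proof -
  obtain a where a: "a \<in> Field W" "B \<in> Brooms a" using assms unfolding BroomsO_def by auto
  have fin: "finite (Diter B (prime_ord a))" using Diter_prime_ord_Brooms[OF a] by blast
  obtain q where "q \<in> Field W" "(prime_ord a, q) \<in> W" "prime_ord a \<noteq> q"
    using W_no_max[OF W_FieldI1[OF prime_ord_le[OF a(1)]]] by blast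
  then show ?thesis using Diter_empty_above_finite[OF _ _ fin] unfolding DiterO_def by auto
qed

lemma DiterO_primeO_BroomsO:
  assumes "\<alpha> \<in> ords_le_omega1" "B \<in> BroomsO \<alpha>"
  shows "finite (DiterO B (primeO \<alpha>)) \<and>
    (evenO \<alpha> \<longrightarrow> DiterO B (primeO \<alpha>) = {} \<or> DiterO B (primeO \<alpha>) = {[]})"
proof (cases \<alpha>)
  case None
  then show ?thesis using DiterO_omega1_Brooms assms(2) unfolding primeO_def by simp
next
  case (Some a)
  then have "a \<in> Field W" "B \<in> Brooms a" using assms unfolding ords_le_omega1_def BroomsO_def by auto
  then show ?thesis using Some Diter_prime_ord_Brooms
    unfolding DiterO_def primeO_def evenO_def by (auto simp: subset_singleton_iff)
qed

theorem lemma7p1: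
  assumes "\<alpha> \<in> ords_le_omega1"
  shows "(\<forall>B \<in> BroomsO \<alpha>.
            finite (DiterO B (primeO \<alpha>)) \<and>
            (evenO \<alpha> \<longrightarrow> DiterO B (primeO \<alpha>) = {} \<or> DiterO B (primeO \<alpha>) = {[]}))
       \<and> (\<forall>A \<in> BroomExtO \<alpha>.
            finite (DiterO (Diie_inf A) (primeO \<alpha>)) \<and>
            (evenO \<alpha> \<longrightarrow> DiterO (Diie_inf A) (primeO \<alpha>) = {} \<or>
                         DiterO (Diie_inf A) (primeO \<alpha>) = {[]}))"
proof (rule conjI; intro ballI)
  fix B assume "B \<in> BroomsO \<alpha>"
  then show "finite (DiterO B (primeO \<alpha>)) \<and>
      (evenO \<alpha> \<longrightarrow> DiterO B (primeO \<alpha>) = {} \<or> DiterO B (primeO \<alpha>) = {[]})"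
    using DiterO_primeO_BroomsO[OF assms] by blast
next
  fix A assume "A \<in> BroomExtO \<alpha>"
  then obtain B where "B \<in> BroomsO \<alpha>" "Diie_inf A = clTr B"
    using Diie_inf_broom_ext unfolding BroomExtO_def by blast
  then show "finite (DiterO (Diie_inf A) (primeO \<alpha>)) \<and>
      (evenO \<alpha> \<longrightarrow> DiterO (Diie_inf A) (primeO \<alpha>) = {} \<or> DiterO (Diie_inf A) (primeO \<alpha>) = {[]})"
    using DiterO_primeO_BroomsO[OF assms] DiterO_clTr by simp
qed

end
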